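(* Let $(\Omega,\mathcal{F},P)$ be a probability space and $X$ a scalar random variable with distribution $\pi$ and upper bound $\ell\in\mathbb{R}$ with $\mathbb{P}_\pi[X\le\ell]=1$. Let $g$ be a closed convex function with $g(1)=0$, $\beta\ge 0$, $\mathrm{ER}_{g,\beta}$ the $g$-entropic risk measure with divergence level $\beta$, and suppose $g^*:\mathbb{R}\to\mathbb{R}$ (the convex conjugate of $g$) is real-valued. Let $L(x,\mu,t)=t\left(\mu+g^*\left(\frac{x}{t}-\mu+\beta\right)\right)$ and let $u_b:D\subset\mathbb{R}^2\to\mathbb{R}$ satisfy $\mathbb{P}_\pi[L(X,\mu,t)\le u_b(\mu,t)]=1$ for all $\mu\in\mathbb{R}$, $t>0$. Let $\gamma\in[0,1)$, $\epsilon\in(0,1)$, and let $x_1,\dots,x_N$ be independent samples of $X$ with $N \ge \frac{\log(1-\gamma)}{\log(1-\epsilon)}$, and $\zeta^*_N(\mu,t)=\max_{1\le k\le N}L(x_k,\mu,t)$. Then \[ \mathbb{P}^N_{\pi}\left[\mathrm{ER}_{g,\beta}(X) \le \inf_{t>0,\ \mu\in\mathbb{R}} \zeta^*_N(\mu,t)(1-\epsilon)+u_b(\mu,t)\epsilon\right] \ge \gamma. \]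
   Context: $\mathrm{ER}_{g,\beta}(X)=\sup\{\mathbb{E}_Q[X] : Q\ll P,\ \int g(\frac{dQ}{dP})dP\le\beta\}$. The convex conjugate is $g^*(y)=\sup_x(xy-g(x))$. $\zeta^*_N(\mu,t)$ is the solution of $\min_\zeta\zeta$ subject to $\zeta\ge L(x_i,\mu,t)$ for all $i$. $\mathbb{P}^N_\pi$ is the $N$-fold product measure governing the i.i.d. sample. *)

theory Defs
  imports "HOL-Probability.Probability"
begin

definition epigraph :: "(real \<Rightarrow> ereal) \<Rightarrow> (real \<times> real) set" where
  "epigraph g = {(x, y). g x \<le> ereal y}"

definition closed_convex_fun :: "(real \<Rightarrow> ereal) \<Rightarrow> bool" where
  "closed_convex_fun g \<longleftrightarrow> convex (epigraph g) \<and> closed (epigraph g)"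

definition conj_fun :: "(real \<Rightarrow> ereal) \<Rightarrow> real \<Rightarrow> ereal" where
  "conj_fun g y = (SUP x. ereal (x * y) - g x)"

definition ext_integral :: "'a measure \<Rightarrow> ('a \<Rightarrow> ereal) \<Rightarrow> ereal" where
  "ext_integral M h =
     enn2ereal (\<integral>\<^sup>+ w. e2ennreal (max 0 (h w)) \<partial>M)
   - enn2ereal (\<integral>\<^sup>+ w. e2ennreal (max 0 (- h w)) \<partial>M)"

definition entropic_risk ::
  "'a measure \<Rightarrow> (real \<Rightarrow> ereal) \<Rightarrow> real \<Rightarrow> ('a \<Rightarrow> real) \<Rightarrow> ereal" where
  "entropic_risk M g \<beta> X =
     (SUP Q \<in> {Q. sets Q = sets M \<and> prob_space Q \<and> absolutely_continuous M Q \<and>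
                ext_integral M (\<lambda>w. g (enn2real (RN_deriv M Q w))) \<le> ereal \<beta>}.
        ext_integral Q (\<lambda>w. ereal (X w)))"

definition Lfun :: "(real \<Rightarrow> ereal) \<Rightarrow> real \<Rightarrow> real \<Rightarrow> real \<Rightarrow> real \<Rightarrow> real" where
  "Lfun g \<beta> x \<mu> t = t * (\<mu> + real_of_ereal (conj_fun g (x / t - \<mu> + \<beta>)))"

text \<open>zeta*_N(mu,t): optimal value of min zeta s.t. zeta >= L(x_i,mu,t), i.e. the max.\<close>
definition zeta_star :: "(real \<Rightarrow> ereal) \<Rightarrow> real \<Rightarrow> nat \<Rightarrow> (nat \<Rightarrow> real) \<Rightarrow> real \<Rightarrow> real \<Rightarrow> real" where
  "zeta_star g \<beta> N xs \<mu> t = Max ((\<lambda>k. Lfun g \<beta> (xs k) \<mu> t) ` {..<N})"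

end

(*
  Let q be a quantile of X with P[X < q] <= 1 - eps and P[X > q] <= eps.  With probability
  at least 1 - (1 - eps)^N >= gamma some sample x_k satisfies x_k >= q, and such a sample
  alone already certifies the bound.  Indeed, for a feasible Q with density z = dQ/dP and
  any mu and t > 0, Fenchel-Young for g gives pointwise
      z x <= L(x, mu, t) + t (g(z) + (z - 1) mu - z beta).
  On {X <= q} we use z X <= z x_k and apply this at x_k, where L(x_k, mu, t) <= zeta*_N;
  on {X > q}, an event of probability at most eps, we apply it at X, where L <= u_b.
  Integrating, with E[z] = 1 and E[g(z)] <= beta, gives
      E_Q[X] <= zeta*_N (1 - eps) + u_b eps.
*)

theory Submission
  imports Defs
begin

lemma conj_fun_ge: "ereal (x * y) - g x \<le> conj_fun g y"
  unfolding conj_fun_def by (rule SUP_upper) simp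

lemma conj_fun_le:
  assumes "\<And>x. ereal (x * y) - g x \<le> B"
  shows "conj_fun g y \<le> B"
  unfolding conj_fun_def using assms by (intro SUP_least)

locale finite_conjugate =
  fixes g :: "real \<Rightarrow> ereal"
  assumes conj_finite: "\<forall>y. conj_fun g y \<noteq> \<infinity> \<and> conj_fun g y \<noteq> -\<infinity>"
begin

lemma conj_fun_eq_ereal: "conj_fun g y = ereal (real_of_ereal (conj_fun g y))"
  using conj_finite by (cases "conj_fun g y") auto

lemma neq_MInf: "g x \<noteq> -\<infinity>"
proof
  assume "g x = -\<infinity>"
  with conj_fun_ge[of x 0 g] have "conj_fun g 0 = \<infinity>" by simp
  with conj_finite show False by blast
qed

lemma eq_ereal: "g x \<noteq> \<infinity> \<Longrightarrow> g x = ereal (real_of_ereal (g x))"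
  using neq_MInf[of x] by (cases "g x") auto

lemma fenchel_young:
  assumes "g x \<noteq> \<infinity>"
  shows "x * y - real_of_ereal (g x) \<le> real_of_ereal (conj_fun g y)"
proof -
  have "ereal (x * y) - ereal (real_of_ereal (g x)) \<le> ereal (real_of_ereal (conj_fun g y))"
    using conj_fun_ge[of x y g] by (simp flip: eq_ereal[OF assms] conj_fun_eq_ereal)
  then show ?thesis by simp
qed

lemma ge_neg_conj_0: "ereal (- real_of_ereal (conj_fun g 0)) \<le> g x"
proof (cases "g x = \<infinity>")
  case False
  with fenchel_young[OF False, of 0] show ?thesis by (subst eq_ereal[OF False]) simp
qed simp

lemma convex_on_conj: "convex_on UNIV (\<lambda>y. real_of_ereal (conj_fun g y))"
proof (rule convex_onI)
  fix s a b :: real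
  assume s: "0 < s" "s < 1"
  let ?c = "\<lambda>y. real_of_ereal (conj_fun g y)"
  have "ereal (x * ((1 - s) * a + s * b)) - g x \<le> ereal ((1 - s) * ?c a + s * ?c b)" for x
  proof (cases "g x = \<infinity>")
    case False
    have "x * ((1 - s) * a + s * b) - real_of_ereal (g x)
        = (1 - s) * (x * a - real_of_ereal (g x)) + s * (x * b - real_of_ereal (g x))"
      by (simp add: algebra_simps)
    also have "\<dots> \<le> (1 - s) * ?c a + s * ?c b"
      using fenchel_young[OF False] s by (intro add_mono mult_left_mono) auto
    finally show ?thesis by (subst eq_ereal[OF False]) simp
  qed simp
  then have "conj_fun g ((1 - s) * a + s * b) \<le> ereal ((1 - s) * ?c a + s * ?c b)"
    by (rule conj_fun_le)
  then show "?c ((1 - s) *\<^sub>R a + s *\<^sub>R b) \<le> (1 - s) * ?c a + s * ?c b"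
    by (subst (asm) conj_fun_eq_ereal) simp
qed simp

lemma continuous_on_Lfun: "continuous_on UNIV (\<lambda>x. Lfun g \<beta> x \<mu> t)"
proof -
  have "continuous_on UNIV (\<lambda>y. real_of_ereal (conj_fun g y))"
    by (rule convex_on_continuous[OF open_UNIV convex_on_conj])
  moreover have "continuous_on UNIV (\<lambda>x. x / t - \<mu> + \<beta>)"
    unfolding divide_inverse by (intro continuous_intros)
  ultimately have "continuous_on UNIV (\<lambda>x. real_of_ereal (conj_fun g (x / t - \<mu> + \<beta>)))"
    by (rule continuous_on_compose2) simp
  then show ?thesis
    unfolding Lfun_def by (intro continuous_intros)
qed

lemma borel_measurable_if_closed_epigraph:
  assumes "closed (epigraph g)"
  shows "g \<in> borel_measurable borel"
  unfolding borel_measurable_ereal_iff_Ioi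
proof
  fix a :: ereal
  show "g -` {a<..} \<inter> space borel \<in> sets borel"
  proof (cases a)
    case (real c)
    have "g -` {a<..} = - ((\<lambda>x. (x, c)) -` epigraph g)"
      using real by (auto simp: epigraph_def)
    moreover have "closed ((\<lambda>x. (x, c)) -` epigraph g)"
      using assms by (intro continuous_closed_vimage) (auto intro!: continuous_intros)
    ultimately show ?thesis by (auto intro: borel_open)
  next
    case MInf
    then have "g -` {a<..} = UNIV" using neq_MInf by auto
    then show ?thesis by simp
  next
    case PInf
    then have "g -` {a<..} = {}" by auto
    then show ?thesis by simp
  qed
qed

lemma Lfun_fenchel_young:
  assumes "t > 0" and "g z \<noteq> \<infinity>"
  shows "z * x \<le> Lfun g \<beta> x \<mu> t + t * (real_of_ereal (g z) + (z - 1) * \<mu> - z * \<beta>)"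
proof -
  let ?y = "x / t - \<mu> + \<beta>"
  have "t * (z * ?y - real_of_ereal (g z)) \<le> t * real_of_ereal (conj_fun g ?y)"
    using fenchel_young[OF assms(2)] assms(1) by (intro mult_left_mono) auto
  moreover have "t * (z * ?y) = z * x - t * z * \<mu> + t * z * \<beta>"
    using assms(1) by (simp add: field_simps)
  ultimately show ?thesis unfolding Lfun_def by (simp add: algebra_simps)
qed

lemma Lfun_sample_bound:
  assumes "t > 0" and "g z \<noteq> \<infinity>" and "0 \<le> z"
    and "Lfun g \<beta> x \<mu> t \<le> u" and "q \<le> s" and "Lfun g \<beta> s \<mu> t \<le> a"
  shows "z * x \<le> (if x \<le> q then min a u else u) + t * (real_of_ereal (g z) + (z - 1) * \<mu> - z * \<beta>)"
proof -
  let ?r = "t * (real_of_ereal (g z) + (z - 1) * \<mu> - z * \<beta>)"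
  have "z * x \<le> u + ?r"
    using Lfun_fenchel_young[OF assms(1,2), of x \<beta> \<mu>] assms(4) by simp
  moreover have "z * x \<le> a + ?r" if "x \<le> q"
  proof -
    have "z * x \<le> z * s"
      using that assms(3,5) by (intro mult_left_mono) auto
    also have "\<dots> \<le> a + ?r"
      using Lfun_fenchel_young[OF assms(1,2), of s \<beta> \<mu>] assms(6) by simp
    finally show ?thesis .
  qed
  ultimately show ?thesis by (simp add: min_def)
qed

end

lemma e2ennreal_max_0: "e2ennreal (max 0 x) = e2ennreal x"
  by (cases "x \<le> 0") (auto simp: max_def e2ennreal_neg)

lemma ext_integral_eq: "ext_integral M h =
  enn2ereal (\<integral>\<^sup>+ w. e2ennreal (h w) \<partial>M) - enn2ereal (\<integral>\<^sup>+ w. e2ennreal (- h w) \<partial>M)"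
  by (simp add: ext_integral_def e2ennreal_max_0)

lemma ext_integral_ereal: "ext_integral M (\<lambda>w. ereal (f w)) =
  enn2ereal (\<integral>\<^sup>+ w. ennreal (f w) \<partial>M) - enn2ereal (\<integral>\<^sup>+ w. ennreal (- f w) \<partial>M)"
  by (simp add: ext_integral_eq)

lemma ext_integral_ereal_integrable:
  assumes "integrable M f"
  shows "ext_integral M (\<lambda>w. ereal (f w)) = ereal (integral\<^sup>L M f)"
proof -
  have "(\<integral>\<^sup>+ w. ennreal (f w) \<partial>M) \<noteq> \<infinity>" "(\<integral>\<^sup>+ w. ennreal (- f w) \<partial>M) \<noteq> \<infinity>"
    using assms by (auto simp: real_integrable_def)
  moreover have "enn2ereal x = ereal (enn2real x)" if "x \<noteq> \<infinity>" for x
    using that by (cases x) auto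
  ultimately show ?thesis
    by (simp add: ext_integral_ereal real_lebesgue_integral_def[OF assms])
qed

lemma (in finite_measure) nn_integral_const_less_top: "(\<integral>\<^sup>+ w. ennreal c \<partial>M) < \<infinity>"
  by (simp add: less_top[symmetric] ennreal_mult_eq_top_iff)

lemma (in finite_measure) ext_integral_ereal_le:
  assumes f[measurable]: "f \<in> borel_measurable M"
    and bounded: "AE w in M. f w \<le> l"
    and integral_le: "integrable M f \<Longrightarrow> integral\<^sup>L M f \<le> c"
  shows "ext_integral M (\<lambda>w. ereal (f w)) \<le> ereal c"
proof (cases "integrable M f")
  case True
  then show ?thesis by (simp add: ext_integral_ereal_integrable integral_le)
next
  case False
  have "(\<integral>\<^sup>+ w. ennreal (f w) \<partial>M) \<le> (\<integral>\<^sup>+ w. ennreal l \<partial>M)"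
    using bounded by (intro nn_integral_mono_AE) (auto elim!: eventually_mono intro: ennreal_leI)
  also have "\<dots> < \<infinity>" by (rule nn_integral_const_less_top)
  finally have "(\<integral>\<^sup>+ w. ennreal (f w) \<partial>M) \<noteq> \<infinity>" by simp
  with False have "(\<integral>\<^sup>+ w. ennreal (- f w) \<partial>M) = \<infinity>"
    by (auto simp: real_integrable_def)
  with \<open>(\<integral>\<^sup>+ w. ennreal (f w) \<partial>M) \<noteq> \<infinity>\<close> show ?thesis
    by (cases "\<integral>\<^sup>+ w. ennreal (f w) \<partial>M") (auto simp: ext_integral_ereal)
qed

lemma (in finite_measure) ext_integral_bounded_below:
  assumes h[measurable]: "h \<in> borel_measurable M"
    and bounded: "\<And>w. ereal c \<le> h w"
    and ext_integral_le: "ext_integral M h \<le> ereal b"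
  shows "AE w in M. h w \<noteq> \<infinity>"
    and "integrable M (\<lambda>w. real_of_ereal (h w))"
    and "(\<integral>w. real_of_ereal (h w) \<partial>M) \<le> b"
proof -
  let ?f = "\<lambda>w. real_of_ereal (h w)"
  let ?pos = "\<integral>\<^sup>+ w. e2ennreal (h w) \<partial>M" and ?neg = "\<integral>\<^sup>+ w. e2ennreal (- h w) \<partial>M"
  have "?neg \<le> (\<integral>\<^sup>+ w. ennreal (- c) \<partial>M)"
  proof (rule nn_integral_mono)
    show "e2ennreal (- h w) \<le> ennreal (- c)" for w
      using bounded[of w] by (cases "h w") (auto intro: ennreal_leI simp: e2ennreal_neg)
  qed
  also have "\<dots> < \<infinity>" by (rule nn_integral_const_less_top)
  finally have neg_finite: "?neg \<noteq> \<infinity>" by simp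
  have pos_finite: "?pos \<noteq> \<infinity>"
  proof
    assume "?pos = \<infinity>"
    with neg_finite have "ext_integral M h = \<infinity>"
      by (cases ?neg) (auto simp: ext_integral_eq)
    with ext_integral_le show False by simp
  qed
  show "AE w in M. h w \<noteq> \<infinity>"
    using nn_integral_PInf_AE[of "\<lambda>w. e2ennreal (h w)" M] pos_finite
    by (auto elim!: eventually_mono)
  then have real_AE:
      "AE w in M. e2ennreal (h w) = ennreal (?f w) \<and> e2ennreal (- h w) = ennreal (- ?f w)"
  proof (rule eventually_mono)
    fix w assume "h w \<noteq> \<infinity>"
    with bounded[of w]
    show "e2ennreal (h w) = ennreal (?f w) \<and> e2ennreal (- h w) = ennreal (- ?f w)"
      by (cases "h w") auto
  qed
  have pos: "(\<integral>\<^sup>+ w. ennreal (?f w) \<partial>M) = ?pos"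
    by (rule nn_integral_cong_AE[OF eventually_mono[OF real_AE]]) simp
  have neg: "(\<integral>\<^sup>+ w. ennreal (- ?f w) \<partial>M) = ?neg"
    by (rule nn_integral_cong_AE[OF eventually_mono[OF real_AE]]) simp
  show integrable: "integrable M ?f"
    using pos_finite neg_finite by (simp add: real_integrable_def pos neg)
  have "ext_integral M (\<lambda>w. ereal (?f w)) = ext_integral M h"
    by (simp add: ext_integral_ereal ext_integral_eq pos neg)
  with ext_integral_le show "(\<integral>w. ?f w \<partial>M) \<le> b"
    by (metis ext_integral_ereal_integrable[OF integrable] ereal_less_eq(3))
qed

lemma (in prob_space) AE_of_measure_distr_eq_1:
  assumes X: "X \<in> borel_measurable M" and "measure (distr M borel X) A = 1"
  shows "AE w in M. X w \<in> A"
proof -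
  have "A \<in> sets borel"
    using assms(2) measure_notin_sets[of A "distr M borel X"] by fastforce
  then have "AE x in distr M borel X. x \<in> A"
    using assms(2) prob_space_distr[OF X] by (simp add: prob_space.AE_prob_1)
  with \<open>A \<in> sets borel\<close> show ?thesis
    by (simp add: AE_distr_iff X)
qed

lemma (in prob_space) RN_deriv_real_density:
  assumes Q: "prob_space Q" "sets Q = sets M" "absolutely_continuous M Q"
  defines "z \<equiv> \<lambda>w. enn2real (RN_deriv M Q w)"
  shows "Q = density M (\<lambda>w. ennreal (z w))" and "integrable M z" and "integral\<^sup>L M z = 1"
proof -
  interpret Q: prob_space Q by fact
  have [measurable]: "z \<in> borel_measurable M"
    unfolding z_def by measurable
  have z_nonneg: "0 \<le> z w" for w
    by (simp add: z_def)
  have "AE w in M. RN_deriv M Q w \<noteq> \<infinity>"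
    using RN_deriv_finite[OF Q.sigma_finite_measure_axioms Q(3,2)] .
  then have "AE w in M. RN_deriv M Q w = ennreal (z w)"
    by eventually_elim (simp add: z_def less_top)
  then have "density M (RN_deriv M Q) = density M (\<lambda>w. ennreal (z w))"
    by (intro density_cong) (auto simp: z_def)
  then show Q_eq: "Q = density M (\<lambda>w. ennreal (z w))"
    using density_RN_deriv[OF Q(3,2)] by simp
  have "emeasure Q (space M) = (\<integral>\<^sup>+ w. ennreal (z w) \<partial>M)"
    by (subst Q_eq) (simp add: emeasure_density)
  then have nn: "(\<integral>\<^sup>+ w. ennreal (z w) \<partial>M) = 1"
    using Q.emeasure_space_1 sets_eq_imp_space_eq[OF Q(2)] by simp
  show "integrable M z"
    by (rule integrableI_nonneg) (auto simp: nn z_nonneg)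
  then show "integral\<^sup>L M z = 1"
    using nn_integral_eq_integral[of M z] nn z_nonneg by simp
qed

lemma (in real_distribution) quantile_exists:
  assumes "0 < \<epsilon>" "\<epsilon> < 1"
  obtains q where "measure M {..<q} \<le> 1 - \<epsilon>" and "measure M {q<..} \<le> \<epsilon>"
proof -
  define S where "S = {x. 1 - \<epsilon> \<le> cdf M x}"
  define q where "q = Inf S"
  have "\<forall>\<^sub>F x in at_top. 1 - \<epsilon> < cdf M x"
    using cdf_lim_at_top_prob assms by (intro order_tendstoD) auto
  then obtain s where "1 - \<epsilon> < cdf M s"
    unfolding eventually_at_top_linorder by blast
  then have "S \<noteq> {}"
    unfolding S_def by (blast intro: less_imp_le)
  have "\<forall>\<^sub>F x in at_bot. cdf M x < 1 - \<epsilon>"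
    using cdf_lim_at_bot assms by (intro order_tendstoD) auto
  then obtain b where b: "\<And>x. x \<le> b \<Longrightarrow> cdf M x < 1 - \<epsilon>"
    unfolding eventually_at_bot_linorder by blast
  have "b \<le> x" if "x \<in> S" for x
    using b[of x] that by (cases "x \<le> b") (auto simp: S_def)
  then have "bdd_below S" by (rule bdd_belowI)
  have "1 - \<epsilon> \<le> cdf M x" if "q < x" for x
  proof -
    obtain s where "s \<in> S" "s < x"
      using \<open>q < x\<close> cInf_less_iff[OF \<open>S \<noteq> {}\<close> \<open>bdd_below S\<close>] by (auto simp: q_def)
    then show ?thesis
      using cdf_nondecreasing[of s x] by (auto simp: S_def)
  qed
  then have "1 - \<epsilon> \<le> cdf M q"
    using cdf_is_right_cont[of q]
    by (intro tendsto_lowerbound[of "cdf M"])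
      (auto simp: continuous_within eventually_at_right_field intro: gt_ex)
  then have "measure M {q<..} \<le> \<epsilon>"
    using prob_compl[of "{..q}"] by (auto simp: cdf_def2 Compl_eq_Diff_UNIV[symmetric] Compl_atMost)
  moreover have "cdf M x < 1 - \<epsilon>" if "x < q" for x
  proof (rule ccontr)
    assume "\<not> cdf M x < 1 - \<epsilon>"
    then have "q \<le> x"
      unfolding q_def by (intro cInf_lower \<open>bdd_below S\<close>) (simp add: S_def)
    with that show False by simp
  qed
  then have "measure M {..<q} \<le> 1 - \<epsilon>"
    by (intro tendsto_upperbound[OF cdf_at_left])
      (auto simp: eventually_at_left_field less_imp_le intro: lt_ex)
  ultimately show ?thesis by (rule that[rotated])
qed

lemma prob_PiM_exists_component_in:
  assumes P: "prob_space P" and A: "A \<in> sets P" and I: "finite I"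
  shows "measure (PiM I (\<lambda>_. P)) {xs \<in> space (PiM I (\<lambda>_. P)). \<exists>k\<in>I. xs k \<in> A}
    = 1 - (1 - measure P A) ^ card I"
proof -
  interpret factor: prob_space P by fact
  interpret product_prob_space "\<lambda>_. P" I
    by (simp add: product_prob_space_def product_sigma_finite_def product_prob_space_axioms_def
        factor.sigma_finite_measure_axioms P)
  interpret finite_product_prob_space "\<lambda>_. P" I
    by unfold_locales (rule I)
  let ?E = "{xs \<in> space (PiM I (\<lambda>_. P)). \<exists>k\<in>I. xs k \<in> A}"
  let ?miss = "PiE I (\<lambda>_. space P - A)"
  have E_eq: "?E = space (PiM I (\<lambda>_. P)) - ?miss"
    by (auto simp: space_PiM PiE_def Pi_def)
  have "?miss \<in> sets (PiM I (\<lambda>_. P))"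
    using A by (intro sets_PiM_I_finite I) auto
  then have "measure (PiM I (\<lambda>_. P)) ?E = 1 - measure (PiM I (\<lambda>_. P)) ?miss"
    unfolding E_eq by (rule prob_compl)
  also have "measure (PiM I (\<lambda>_. P)) ?miss = (1 - measure P A) ^ card I"
    using A by (simp add: prob_times factor.prob_compl)
  finally show ?thesis .
qed

lemma power_le_if_ge_ln_div_ln:
  fixes a b :: real
  assumes "0 < a" "a < 1" "0 < b" "ln b / ln a \<le> real n"
  shows "a ^ n \<le> b"
proof -
  have "ln b \<ge> n * ln a"
    using assms by (simp add: divide_le_eq)
  then have "ln (a ^ n) \<le> ln b"
    using assms by (simp add: ln_realpow)
  then show ?thesis
    using assms by simp
qed

lemma continuous_on_Max_image:
  assumes "finite I" "I \<noteq> {}" "\<And>i. i \<in> I \<Longrightarrow> continuous_on S (f i)"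
  shows "continuous_on S (\<lambda>x. Max ((\<lambda>i. f i x :: 'a :: linorder_topology) ` I))"
  using assms
proof (induction I rule: finite_ne_induct)
  case (insert i I)
  then show ?case by (simp add: continuous_on_max)
qed simp

lemma closed_Collect_le_INF:
  fixes f :: "'i \<Rightarrow> 'a::topological_space \<Rightarrow> 'b::{complete_linorder, linorder_topology}"
  assumes "\<And>i. i \<in> I \<Longrightarrow> continuous_on UNIV (f i)"
  shows "closed {x. c \<le> (INF i\<in>I. f i x)}"
proof -
  have "{x. c \<le> (INF i\<in>I. f i x)} = (\<Inter>i\<in>I. {x. c \<le> f i x})"
    by (auto simp: le_INF_iff)
  then show ?thesis
    using assms by (auto intro!: closed_INT closed_Collect_le continuous_on_const)
qed

lemma measurable_id_PiM_borel:
  assumes "\<And>i. i \<in> I \<Longrightarrow> sets (P i) = sets borel"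
  shows "(\<lambda>x. x) \<in> measurable (PiM I P)
    (borel :: ('i::countable \<Rightarrow> 'a::second_countable_topology) measure)"
proof -
  have "(\<lambda>x. x) \<in> measurable (PiM I P) (PiM UNIV (\<lambda>_. borel :: 'a measure))"
  proof (rule measurable_PiM_single')
    fix i
    show "(\<lambda>x. x i) \<in> borel_measurable (PiM I P)"
    proof (cases "i \<in> I")
      case True
      then show ?thesis
        using measurable_component_singleton[OF True, of P] assms[OF True]
        by (simp cong: measurable_cong_sets)
    next
      case False
      then have "x i = undefined" if "x \<in> space (PiM I P)" for x
        using that by (auto simp: space_PiM PiE_def extensional_def)
      then show ?thesis
        by (subst measurable_cong[where g = "\<lambda>_. undefined"]) auto
    qed
  qed auto
  then show ?thesis
    by (simp cong: measurable_cong_sets add: sets_PiM_equal_borel)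
qed

context finite_conjugate
begin

lemma integral_weighted_le_sample_bound:
  assumes "prob_space M" and [measurable]: "X \<in> borel_measurable M"
    and [measurable]: "z \<in> borel_measurable M" and z_nonneg: "\<And>w. 0 \<le> z w"
    and z_integrable: "integrable M z" and z_integral: "integral\<^sup>L M z = 1"
    and g_integrable: "integrable M (\<lambda>w. real_of_ereal (g (z w)))"
    and g_finite: "AE w in M. g (z w) \<noteq> \<infinity>"
    and g_integral: "(\<integral>w. real_of_ereal (g (z w)) \<partial>M) \<le> \<beta>"
    and zX_integrable: "integrable M (\<lambda>w. z w * X w)"
    and ub: "AE w in M. Lfun g \<beta> (X w) \<mu> t \<le> u" and "t > 0"
    and tail: "measure M {w \<in> space M. q < X w} \<le> \<epsilon>" and "\<epsilon> \<le> 1"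
    and "q \<le> s" and "Lfun g \<beta> s \<mu> t \<le> a"
  shows "(\<integral>w. z w * X w \<partial>M) \<le> a * (1 - \<epsilon>) + u * \<epsilon>"
proof -
  interpret prob_space M by fact
  define m where "m = min a u"
  define Y where "Y = {w \<in> space M. q < X w}"
  define G where "G = (\<lambda>w. real_of_ereal (g (z w)))"
  define R where "R w = (m - t * \<mu>) + (u - m) * indicator Y w + t * G w + t * (\<mu> - \<beta>) * z w" for w
  have [measurable]: "Y \<in> sets M"
    unfolding Y_def by measurable
  have "integrable M (indicator Y :: 'a \<Rightarrow> real)"
    by (rule integrable_real_indicator) (simp_all add: less_top[symmetric])
  note linearity = this g_integrable[folded G_def] z_integrable
    Bochner_Integration.integral_add Bochner_Integration.integrable_add
  have "integrable M R"
    unfolding R_def by (simp add: linearity)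
  moreover have "AE w in M. z w * X w \<le> R w"
    using ub g_finite AE_space
  proof eventually_elim
    case (elim w)
    show ?case
      using Lfun_sample_bound[OF \<open>t > 0\<close> elim(2) z_nonneg elim(1) \<open>q \<le> s\<close> \<open>Lfun g \<beta> s \<mu> t \<le> a\<close>]
        elim(3)
      by (cases "X w \<le> q") (auto simp: R_def G_def m_def Y_def indicator_def algebra_simps)
  qed
  ultimately have "(\<integral>w. z w * X w \<partial>M) \<le> (\<integral>w. R w \<partial>M)"
    using zX_integrable by (intro integral_mono_AE)
  also have "(\<integral>w. R w \<partial>M) = m + (u - m) * prob Y + t * ((\<integral>w. G w \<partial>M) - \<beta>)"
    unfolding R_def using z_integral by (simp add: linearity prob_space algebra_simps)
  also have "\<dots> \<le> m + (u - m) * \<epsilon>"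
  proof -
    have "(u - m) * prob Y \<le> (u - m) * \<epsilon>"
      using tail by (intro mult_left_mono) (auto simp: Y_def m_def)
    moreover have "t * ((\<integral>w. G w \<partial>M) - \<beta>) \<le> 0"
      using g_integral \<open>t > 0\<close> by (simp add: G_def mult_nonneg_nonpos)
    ultimately show ?thesis by linarith
  qed
  also have "\<dots> = m * (1 - \<epsilon>) + u * \<epsilon>"
    by (simp add: algebra_simps)
  also have "\<dots> \<le> a * (1 - \<epsilon>) + u * \<epsilon>"
    using \<open>\<epsilon> \<le> 1\<close> by (intro add_right_mono mult_right_mono) (auto simp: m_def)
  finally show ?thesis .
qed

lemma ext_integral_le_sample_bound:
  assumes M: "prob_space M" and [measurable]: "X \<in> borel_measurable M"
    and "closed (epigraph g)"
    and Q: "prob_space Q" "sets Q = sets M" "absolutely_continuous M Q"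
    and divergence: "ext_integral M (\<lambda>w. g (enn2real (RN_deriv M Q w))) \<le> ereal \<beta>"
    and bounded: "AE w in M. X w \<le> l"
    and ub: "AE w in M. Lfun g \<beta> (X w) \<mu> t \<le> u" and "t > 0"
    and tail: "measure M {w \<in> space M. q < X w} \<le> \<epsilon>" and "\<epsilon> \<le> 1"
    and "q \<le> s" and "Lfun g \<beta> s \<mu> t \<le> a"
  shows "ext_integral Q (\<lambda>w. ereal (X w)) \<le> ereal (a * (1 - \<epsilon>) + u * \<epsilon>)"
proof -
  interpret prob_space M by fact
  interpret Q: prob_space Q by fact
  let ?z = "\<lambda>w. enn2real (RN_deriv M Q w)"
  have [measurable]: "g \<in> borel_measurable borel"
    using borel_measurable_if_closed_epigraph \<open>closed (epigraph g)\<close> by auto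
  note density = RN_deriv_real_density[OF Q]
  note divergence_integrable = ext_integral_bounded_below[OF _ ge_neg_conj_0 divergence]
  have [measurable]: "X \<in> borel_measurable Q"
    using Q(2) by (simp cong: measurable_cong_sets)
  show ?thesis
  proof (rule Q.ext_integral_ereal_le)
    show "AE w in Q. X w \<le> l"
      by (rule absolutely_continuous_AE[OF Q(2,3) bounded])
    assume "integrable Q X"
    have z_nonneg: "AE w in M. 0 \<le> ?z w"
      by simp
    have "integrable M (\<lambda>w. ?z w * X w)"
      using \<open>integrable Q X\<close> integrable_density[of X M ?z, OF _ _ z_nonneg] density(1) by simp
    moreover have "integral\<^sup>L Q X = (\<integral>w. ?z w * X w \<partial>M)"
      using integral_density[of X M ?z, OF _ _ z_nonneg] density(1) by simp
    ultimately show "integral\<^sup>L Q X \<le> a * (1 - \<epsilon>) + u * \<epsilon>"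
      using integral_weighted_le_sample_bound[OF M, of X ?z] density(2,3) divergence_integrable
        ub tail assms(10,12-14)
      by simp
  qed measurable
qed

lemma entropic_risk_le_sample_bound:
  assumes "prob_space M" and "X \<in> borel_measurable M" and "closed (epigraph g)"
    and "AE w in M. X w \<le> l"
    and ub: "\<And>\<mu> t. t > 0 \<Longrightarrow> AE w in M. Lfun g \<beta> (X w) \<mu> t \<le> u \<mu> t"
    and "measure M {w \<in> space M. q < X w} \<le> \<epsilon>" and "\<epsilon> \<le> 1"
    and "k < N" and "q \<le> xs k"
  shows "entropic_risk M g \<beta> X
    \<le> (INF p \<in> UNIV \<times> {0<..}.
          ereal (zeta_star g \<beta> N xs (fst p) (snd p) * (1 - \<epsilon>) + u (fst p) (snd p) * \<epsilon>))"
  unfolding entropic_risk_def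
proof (intro SUP_least INF_greatest)
  fix Q and p :: "real \<times> real"
  assume "Q \<in> {Q. sets Q = sets M \<and> prob_space Q \<and> absolutely_continuous M Q \<and>
      ext_integral M (\<lambda>w. g (enn2real (RN_deriv M Q w))) \<le> ereal \<beta>}"
    and "p \<in> UNIV \<times> {0<..}"
  moreover have "Lfun g \<beta> (xs k) \<mu> t \<le> zeta_star g \<beta> N xs \<mu> t" for \<mu> t
    unfolding zeta_star_def using \<open>k < N\<close> by (intro Max_ge) auto
  ultimately show "ext_integral Q (\<lambda>w. ereal (X w))
      \<le> ereal (zeta_star g \<beta> N xs (fst p) (snd p) * (1 - \<epsilon>) + u (fst p) (snd p) * \<epsilon>)"
    using ext_integral_le_sample_bound[OF assms(1-3) _ _ _ _ assms(4) ub _ assms(6,7,9)]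
    by (cases p) auto
qed

lemma continuous_on_zeta_star:
  assumes "N > 0"
  shows "continuous_on UNIV (\<lambda>xs. zeta_star g \<beta> N xs \<mu> t)"
  unfolding zeta_star_def using assms
  by (intro continuous_on_Max_image continuous_on_compose2[OF continuous_on_Lfun]
      continuous_on_product_coordinates) auto

lemma sets_PiM_sample_bound_event:
  assumes "N > 0" and "sets P = sets borel"
  shows "{xs \<in> space (PiM {..<N} (\<lambda>_. P)). c \<le> (INF p \<in> I.
      ereal (zeta_star g \<beta> N xs (fst p) (snd p) * a + u (fst p) (snd p) * b))}
    \<in> sets (PiM {..<N} (\<lambda>_. P))"
proof -
  have "closed {xs. c \<le> (INF p \<in> I.
      ereal (zeta_star g \<beta> N xs (fst p) (snd p) * a + u (fst p) (snd p) * b))}"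
    using continuous_on_zeta_star[OF assms(1)]
    by (intro closed_Collect_le_INF continuous_on_compose2[OF continuous_on_ereal])
      (auto intro!: continuous_intros)
  from measurable_sets[OF measurable_id_PiM_borel borel_closed[OF this]] assms(2)
  show ?thesis
    by (simp add: Int_def conj_commute)
qed

lemma measure_sample_bound_event_ge:
  assumes "prob_space M" and X[measurable]: "X \<in> borel_measurable M" and "closed (epigraph g)"
    and bounded: "measure (distr M borel X) {..l} = 1"
    and ub: "\<forall>\<mu> t. t > 0 \<longrightarrow> measure (distr M borel X) {x. Lfun g \<beta> x \<mu> t \<le> u \<mu> t} = 1"
    and tail: "measure (distr M borel X) {q<..} \<le> \<epsilon>" and "\<epsilon> \<le> 1" and "N > 0"
  shows "1 - measure (distr M borel X) {..<q} ^ N \<le> measure (PiM {..<N} (\<lambda>_. distr M borel X))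
    {xs \<in> space (PiM {..<N} (\<lambda>_. distr M borel X)). entropic_risk M g \<beta> X \<le>
      (INF p \<in> UNIV \<times> {0<..}.
        ereal (zeta_star g \<beta> N xs (fst p) (snd p) * (1 - \<epsilon>) + u (fst p) (snd p) * \<epsilon>))}"
    (is "_ \<le> measure ?sample ?event")
proof -
  interpret prob_space M by fact
  let ?P = "distr M borel X"
  interpret P: real_distribution ?P by simp
  interpret sample: prob_space ?sample
    by (intro prob_space_PiM) (simp add: P.prob_space_axioms)
  let ?hit = "{xs \<in> space ?sample. \<exists>k\<in>{..<N}. xs k \<in> {q..}}"
  have "measure ?sample ?hit = 1 - measure ?P {..<q} ^ N"
    using prob_PiM_exists_component_in[of ?P "{q..}" "{..<N}"] P.prob_compl[of "{q..}"]
    by (simp add: P.prob_space_axioms Compl_eq_Diff_UNIV[symmetric])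
  moreover have "?hit \<subseteq> ?event"
  proof
    fix xs assume "xs \<in> ?hit"
    then obtain k where "xs \<in> space ?sample" "k < N" "q \<le> xs k" by auto
    moreover have "AE w in M. X w \<le> l"
      using AE_of_measure_distr_eq_1[OF X bounded] by simp
    moreover have "AE w in M. Lfun g \<beta> (X w) \<mu> t \<le> u \<mu> t" if "t > 0" for \<mu> t
      using AE_of_measure_distr_eq_1[OF X, of "{x. Lfun g \<beta> x \<mu> t \<le> u \<mu> t}"] ub that by simp
    moreover have "measure M {w \<in> space M. q < X w} \<le> \<epsilon>"
      using tail by (simp add: measure_distr vimage_def Int_def conj_commute)
    ultimately show "xs \<in> ?event"
      using entropic_risk_le_sample_bound[OF \<open>prob_space M\<close> X \<open>closed (epigraph g)\<close>] \<open>\<epsilon> \<le> 1\<close>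
      by blast
  qed
  then have "measure ?sample ?hit \<le> measure ?sample ?event"
    using \<open>N > 0\<close> by (intro sample.finite_measure_mono sets_PiM_sample_bound_event) simp_all
  ultimately show ?thesis by simp
qed

end

theorem corollary2:
  fixes M :: "'a measure" and X :: "'a \<Rightarrow> real" and l :: real
    and g :: "real \<Rightarrow> ereal" and \<beta> :: real
    and ub :: "real \<Rightarrow> real \<Rightarrow> real"
    and \<gamma> \<epsilon> :: real and N :: nat
  assumes "prob_space M"
    and "X \<in> borel_measurable M"
    and "measure (distr M borel X) {..l} = 1"
    and "closed_convex_fun g" and "g 1 = 0" and "\<beta> \<ge> 0"
    and "\<forall>y. conj_fun g y \<noteq> \<infinity> \<and> conj_fun g y \<noteq> -\<infinity>"
    and "\<forall>\<mu> t. t > 0 \<longrightarrow>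
           measure (distr M borel X) {x. Lfun g \<beta> x \<mu> t \<le> ub \<mu> t} = 1"
    and "0 \<le> \<gamma>" and "\<gamma> < 1" and "0 < \<epsilon>" and "\<epsilon> < 1"
    and "real N \<ge> ln (1 - \<gamma>) / ln (1 - \<epsilon>)"
  shows "measure (PiM {..<N} (\<lambda>_. distr M borel X))
           {xs \<in> space (PiM {..<N} (\<lambda>_. distr M borel X)).
              entropic_risk M g \<beta> X
                \<le> (INF p \<in> UNIV \<times> {0<..}.
                     ereal (zeta_star g \<beta> N xs (fst p) (snd p) * (1 - \<epsilon>)
                            + ub (fst p) (snd p) * \<epsilon>))} \<ge> \<gamma>"
proof -
  interpret finite_conjugate g by unfold_locales (fact assms(7))
  interpret P: real_distribution "distr M borel X"
    using prob_space.real_distribution_distr[OF assms(1)] assms(2) by simp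
  obtain q where below: "measure (distr M borel X) {..<q} \<le> 1 - \<epsilon>"
    and above: "measure (distr M borel X) {q<..} \<le> \<epsilon>"
    using P.quantile_exists assms(11,12) by blast
  have miss: "(1 - \<epsilon>) ^ N \<le> 1 - \<gamma>"
    by (rule power_le_if_ge_ln_div_ln) (use assms(10-13) in auto)
  show ?thesis
  proof (cases "N = 0")
    case True
    \<comment> \<open>zeta_star is then a maximum over the empty set, but the bound on N forces \<gamma> = 0\<close>
    with miss assms(9) show ?thesis by simp
  next
    case False
    have "measure (distr M borel X) {..<q} ^ N \<le> (1 - \<epsilon>) ^ N"
      using below by (intro power_mono) auto
    moreover have "closed (epigraph g)"
      using assms(4) by (simp add: closed_convex_fun_def)
    note measure_sample_bound_event_ge[OF assms(1,2) this assms(3,8) above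
        less_imp_le[OF assms(12)] neq0_conv[THEN iffD1, OF False]]
    ultimately show ?thesis
      using miss by linarith
  qed
qed

end
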